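(* Consider a nonempty configuration with largest nonempty level $\lambda$. Define $Y_\lambda=\sum_{r\ge0}SS_{\lambda-r}2^{-r+1-b}$, and for $r=0,1,\dots,b$ let $H_r=\lfloor SS_{\lambda-r}/2^b\rfloor$ and $E=\sum_{r=0}^b\lfloor H_r2^{-r+1}\rfloor$. Then $E\le Y_\lambda<E+b+7$, and $Y_\lambda\ge 1$.
   Context: Fix an integer $b\ge 2$. There is a set $\mathcal L$ of $N$ levels, which are consecutive integers. Each level $\ell$ holds a finite (possibly empty) multiset of normalized significands, each an integer in $[2^{b-1},2^b)$. Let $z$ be the total number of stored significands over all levels; assume $z<2^b$ (hence every $SS_\ell<2^{2b}$). For each level, $SS_\ell$ is the sum of its significands (so $SS_\ell=0$ iff the level is empty); set $SS_\ell=0$ for integers $\ell\notin\mathcal L$. The configuration is nonempty if $z\ge1$. *)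

theory Defs
  imports Complex_Main "HOL-Library.Multiset"
begin

text \<open>A configuration: the set of levels is L = {lo ..< lo + N} (N consecutive integers),
  and M l is the multiset of normalized significands stored at level l.\<close>

definition levels :: "int \<Rightarrow> nat \<Rightarrow> int set" where
  "levels lo N = {lo ..< lo + int N}"

definition SS :: "int \<Rightarrow> nat \<Rightarrow> (int \<Rightarrow> nat multiset) \<Rightarrow> int \<Rightarrow> nat" where
  "SS lo N M l = (if l \<in> levels lo N then sum_mset (M l) else 0)"

definition valid_config :: "nat \<Rightarrow> int \<Rightarrow> nat \<Rightarrow> (int \<Rightarrow> nat multiset) \<Rightarrow> bool" where
  "valid_config b lo N M \<longleftrightarrow>
     (\<forall>l \<in> levels lo N. \<forall>x \<in># M l. 2 ^ (b - 1) \<le> x \<and> x < 2 ^ b)"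

definition total_count :: "int \<Rightarrow> nat \<Rightarrow> (int \<Rightarrow> nat multiset) \<Rightarrow> nat" where
  "total_count lo N M = (\<Sum>l \<in> levels lo N. size (M l))"

definition top_level :: "int \<Rightarrow> nat \<Rightarrow> (int \<Rightarrow> nat multiset) \<Rightarrow> int" where
  "top_level lo N M = Max {l \<in> levels lo N. M l \<noteq> {#}}"

end

theory Submission
  imports Defs
begin

text \<open>Write \<open>s r = SS (\<lambda> - r)\<close>, so that \<open>Y = \<Sum>\<^sub>r 2 s r / 2^(r+b)\<close>. For \<open>r \<le> b\<close> the term
  lies in \<open>[2 H\<^sub>r / 2^r, 2 (H\<^sub>r + 1) / 2^r)\<close>, so it exceeds its contribution to \<open>E\<close> by less than
  \<open>1 + 2 / 2^r\<close>; summed over \<open>r \<le> b\<close> this is less than \<open>b + 5\<close>. Since there are fewer than \<open>2^b\<close>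
  significands, each below \<open>2^b\<close>, every \<open>s r\<close> is below \<open>4^b\<close>, which makes the terms with
  \<open>r > b\<close> a geometric tail of total at most 2. Finally the top level holds a significand of
  at least \<open>2^(b-1)\<close>, so already the term \<open>r = 0\<close> is at least 1.\<close>

lemma sum_mset_le_size_mult:
  fixes A :: "nat multiset"
  assumes "\<And>x. x \<in># A \<Longrightarrow> x \<le> c"
  shows "sum_mset A \<le> size A * c"
  using assms by (induction A) (auto intro: add_mono)

lemma top_level_mem:
  assumes "total_count lo N M \<ge> 1"
  shows "top_level lo N M \<in> levels lo N" and "M (top_level lo N M) \<noteq> {#}"
proof -
  have "{l \<in> levels lo N. M l \<noteq> {#}} \<noteq> {}"
  proof
    assume "{l \<in> levels lo N. M l \<noteq> {#}} = {}"
    then have "total_count lo N M = 0"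
      by (auto simp: total_count_def intro: sum.neutral)
    with assms show False
      by simp
  qed
  moreover have "finite {l \<in> levels lo N. M l \<noteq> {#}}"
    by (rule finite_subset[of _ "levels lo N"]) (auto simp: levels_def)
  ultimately have "top_level lo N M \<in> {l \<in> levels lo N. M l \<noteq> {#}}"
    unfolding top_level_def by (intro Max_in)
  then show "top_level lo N M \<in> levels lo N" and "M (top_level lo N M) \<noteq> {#}"
    by simp_all
qed

lemma SS_less_square:
  assumes "valid_config b lo N M" and "total_count lo N M < 2 ^ b"
  shows "SS lo N M l < 2 ^ b * 2 ^ b"
proof (cases "l \<in> levels lo N")
  case True
  have "sum_mset (M l) \<le> size (M l) * 2 ^ b"
    using assms(1) True by (intro sum_mset_le_size_mult) (auto simp: valid_config_def less_imp_le)
  also have "size (M l) \<le> total_count lo N M"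
    unfolding total_count_def using True by (intro member_le_sum) (simp_all add: levels_def)
  then have "size (M l) * 2 ^ b < 2 ^ b * 2 ^ b"
    using assms(2) by simp
  finally show ?thesis
    using True by (simp add: SS_def)
qed (simp add: SS_def)

lemma SS_ge_significand:
  assumes "valid_config b lo N M" and "l \<in> levels lo N" and "M l \<noteq> {#}"
  shows "2 ^ (b - 1) \<le> SS lo N M l"
proof -
  obtain x where x: "x \<in># M l"
    using assms(3) by blast
  then have "2 ^ (b - 1) \<le> x"
    using assms(1,2) by (auto simp: valid_config_def)
  also have "x \<le> sum_mset (M l)"
    using x by (simp add: sum_mset.remove)
  finally show ?thesis
    using assms(2) by (simp add: SS_def)
qed

lemma two_powr_weight: "(2::real) powr (- real r + 1 - real b) = 2 / 2 ^ (r + b)"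
proof -
  have "- real r + 1 - real b = 1 - real (r + b)"
    by simp
  then have "(2::real) powr (- real r + 1 - real b) = 2 powr 1 / 2 powr real (r + b)"
    by (simp only: powr_diff)
  also have "\<dots> = 2 / 2 ^ (r + b)"
    using powr_realpow[of 2 "r + b"] by simp
  finally show ?thesis .
qed

lemma weighted_term_le:
  assumes "x < 2 ^ b * 2 ^ b"
  shows "real x * 2 powr (- real r + 1 - real b) \<le> 2 ^ (b + 1) / 2 ^ r"
proof -
  have x_le: "real x \<le> real (2 ^ b * 2 ^ b)"
    using assms by (simp only: of_nat_le_iff less_imp_le)
  have "real x * 2 powr (- real r + 1 - real b) = 2 * real x / 2 ^ (r + b)"
    unfolding two_powr_weight by simp
  also have "\<dots> \<le> 2 * (2 ^ b * 2 ^ b) / 2 ^ (r + b)"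
    using x_le by (simp add: divide_right_mono)
  also have "\<dots> = 2 ^ (b + 1) / 2 ^ r"
    by (simp add: power_add)
  finally show ?thesis .
qed

lemma floor_digit_term_bounds:
  fixes x b r :: nat
  defines "q \<equiv> real (x div 2 ^ b) * 2 powr (- real r + 1)"
  shows "\<lfloor>q\<rfloor> \<le> real x * 2 powr (- real r + 1 - real b)"
    and "real x * 2 powr (- real r + 1 - real b) < real_of_int \<lfloor>q\<rfloor> + 1 + 2 / 2 ^ r"
proof -
  define h where "h = real (x div 2 ^ b)"
  have "x = 2 ^ b * (x div 2 ^ b) + x mod 2 ^ b" and "x mod 2 ^ b < 2 ^ b"
    by simp_all
  then have "2 ^ b * (x div 2 ^ b) \<le> x" and "x < 2 ^ b * (x div 2 ^ b) + 2 ^ b"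
    by linarith+
  then have "real (2 ^ b * (x div 2 ^ b)) \<le> real x"
    and "real x < real (2 ^ b * (x div 2 ^ b) + 2 ^ b)"
    by (simp_all only: of_nat_le_iff of_nat_less_iff)
  then have h_low: "2 ^ b * h \<le> real x" and h_up: "real x < 2 ^ b * h + 2 ^ b"
    unfolding h_def by simp_all
  have q_eq: "q = 2 * h / 2 ^ r"
    unfolding q_def h_def using two_powr_weight[of r 0] by simp
  have "2 * h / 2 ^ r = 2 * (2 ^ b * h) / 2 ^ (r + b)"
    by (simp add: power_add)
  also have "\<dots> \<le> 2 * real x / 2 ^ (r + b)"
    using h_low by (simp add: divide_right_mono)
  finally have lower: "q \<le> 2 * real x / 2 ^ (r + b)"
    unfolding q_eq .
  have "2 * real x / 2 ^ (r + b) < 2 * (2 ^ b * h + 2 ^ b) / 2 ^ (r + b)"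
    using h_up by (simp add: divide_strict_right_mono)
  also have "\<dots> = 2 * h / 2 ^ r + 2 / 2 ^ r"
    by (simp add: power_add field_simps)
  finally have upper: "2 * real x / 2 ^ (r + b) < q + 2 / 2 ^ r"
    unfolding q_eq .
  have weight: "real x * 2 powr (- real r + 1 - real b) = 2 * real x / 2 ^ (r + b)"
    unfolding two_powr_weight by simp
  show "\<lfloor>q\<rfloor> \<le> real x * 2 powr (- real r + 1 - real b)"
    using lower weight of_int_floor_le[of q] by linarith
  show "real x * 2 powr (- real r + 1 - real b) < real_of_int \<lfloor>q\<rfloor> + 1 + 2 / 2 ^ r"
    using upper weight real_of_int_floor_add_one_gt[of q] by linarith
qed

lemma summable_weighted_digits:
  fixes s :: "nat \<Rightarrow> nat"
  assumes "\<And>r. s r < 2 ^ b * 2 ^ b"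
  shows "summable (\<lambda>r. real (s r) * 2 powr (- real r + 1 - real b))"
proof (rule summable_comparison_test'[where N = 0])
  show "summable (\<lambda>r. 2 ^ (b + 1) * (1 / 2) ^ r :: real)"
    by (intro summable_mult summable_geometric) simp
  show "norm (real (s r) * 2 powr (- real r + 1 - real b)) \<le> 2 ^ (b + 1) * (1 / 2) ^ r" for r
    using weighted_term_le[OF assms] by (simp add: power_one_over)
qed

lemma weighted_digit_sum_bounds:
  fixes s :: "nat \<Rightarrow> nat" and b :: nat
  assumes bound: "\<And>r. s r < 2 ^ b * 2 ^ b"
  defines "Y \<equiv> \<Sum>r. real (s r) * 2 powr (- real r + 1 - real b)"
    and "E \<equiv> \<Sum>r = 0..b. \<lfloor>real (s r div 2 ^ b) * 2 powr (- real r + 1)\<rfloor>"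
  shows "real_of_int E \<le> Y" and "Y < real_of_int E + real b + 7"
proof -
  define f where "f r = real (s r) * 2 powr (- real r + 1 - real b)" for r
  define g where "g r = real_of_int \<lfloor>real (s r div 2 ^ b) * 2 powr (- real r + 1)\<rfloor>" for r
  have "summable f"
    unfolding f_def using bound by (rule summable_weighted_digits)
  then have Y_split: "Y = (\<Sum>n. f (n + Suc b)) + (\<Sum>r\<le>b. f r)"
    unfolding Y_def f_def [symmetric] lessThan_Suc_atMost [symmetric]
    by (rule suminf_split_initial_segment)
  have E_eq: "real_of_int E = (\<Sum>r\<le>b. g r)"
    unfolding E_def g_def by (simp add: atLeast0AtMost)
  have tail_summable: "summable (\<lambda>n. f (n + Suc b))"
    using \<open>summable f\<close> by (rule summable_iff_shift [THEN iffD2])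
  then have tail_nonneg: "0 \<le> (\<Sum>n. f (n + Suc b))"
    by (rule suminf_nonneg) (simp add: f_def)
  have tail_le: "(\<Sum>n. f (n + Suc b)) \<le> 2"
  proof -
    have "f (n + Suc b) \<le> (1 / 2) ^ n" for n
    proof -
      have "f (n + Suc b) \<le> 2 ^ (b + 1) / 2 ^ (n + Suc b)"
        unfolding f_def by (rule weighted_term_le [OF bound])
      also have "\<dots> = (1 / 2) ^ n"
        by (simp add: power_add power_one_over)
      finally show ?thesis .
    qed
    then have "(\<Sum>n. f (n + Suc b)) \<le> (\<Sum>n. (1 / 2 :: real) ^ n)"
      using tail_summable by (intro suminf_le summable_geometric) simp_all
    also have "\<dots> = 2"
      by (simp add: suminf_geometric)
    finally show ?thesis .
  qed
  have head_lower: "(\<Sum>r\<le>b. g r) \<le> (\<Sum>r\<le>b. f r)"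
    unfolding f_def g_def by (intro sum_mono floor_digit_term_bounds)
  have head_upper: "(\<Sum>r\<le>b. f r) < (\<Sum>r\<le>b. g r + 1 + 2 / 2 ^ r)"
    unfolding f_def g_def by (intro sum_strict_mono floor_digit_term_bounds) auto
  have "(\<Sum>r\<le>b. 2 / 2 ^ r :: real) = 2 * (\<Sum>r\<le>b. (1 / 2) ^ r)"
    by (simp add: sum_distrib_left power_one_over)
  also have "\<dots> < 4"
    using geometric_sum_less[of "1 / 2 :: real" "{..b}"] by simp
  finally have "(\<Sum>r\<le>b. g r + 1 + 2 / 2 ^ r) < (\<Sum>r\<le>b. g r) + real b + 5"
    by (simp add: sum.distrib)
  then show "real_of_int E \<le> Y" and "Y < real_of_int E + real b + 7"
    using Y_split E_eq tail_nonneg tail_le head_lower head_upper by linarith+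
qed

lemma weighted_digit_sum_ge_one:
  fixes s :: "nat \<Rightarrow> nat"
  assumes "\<And>r. s r < 2 ^ b * 2 ^ b" and "b \<ge> 1" and "2 ^ (b - 1) \<le> s 0"
  shows "1 \<le> (\<Sum>r. real (s r) * 2 powr (- real r + 1 - real b))"
proof -
  have "(2::real) ^ b = 2 * 2 ^ (b - 1)"
    using assms(2) by (cases b) simp_all
  moreover have "(2::real) ^ (b - 1) \<le> real (s 0)"
    using assms(3) by simp
  ultimately have "1 \<le> 2 * real (s 0) / 2 ^ b"
    by (simp add: le_divide_eq)
  also have "\<dots> = real (s 0) * 2 powr (- real 0 + 1 - real b)"
    using two_powr_weight[of 0 b] by simp
  also have "\<dots> \<le> (\<Sum>r. real (s r) * 2 powr (- real r + 1 - real b))"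
    using sum_le_suminf[OF summable_weighted_digits[OF assms(1)], of "{0}"] by simp
  finally show ?thesis .
qed

theorem mainTheorem8:
  fixes b :: nat and lo :: int and N :: nat and M :: "int \<Rightarrow> nat multiset"
    and lam :: int and Y :: real and H :: "nat \<Rightarrow> nat" and E :: int
  assumes hb: "b \<ge> 2"
    and hvalid: "valid_config b lo N M"
    and hz: "total_count lo N M < 2 ^ b"
    and hne: "total_count lo N M \<ge> 1"
    and hlam: "lam = top_level lo N M"
    and hY: "Y = (\<Sum>r. real (SS lo N M (lam - int r)) * 2 powr (- real r + 1 - real b))"
    and hH: "\<forall>r. H r = SS lo N M (lam - int r) div 2 ^ b"
    and hE: "E = (\<Sum>r = 0..b. \<lfloor>real (H r) * 2 powr (- real r + 1)\<rfloor>)"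
  shows "real_of_int E \<le> Y \<and> Y < real_of_int E + real b + 7 \<and> Y \<ge> 1"
proof -
  define s where "s r = SS lo N M (lam - int r)" for r
  have bound: "s r < 2 ^ b * 2 ^ b" for r
    unfolding s_def using hvalid hz by (rule SS_less_square)
  have "2 ^ (b - 1) \<le> s 0"
    using SS_ge_significand[OF hvalid top_level_mem[OF hne]] by (simp add: s_def hlam)
  moreover have "Y = (\<Sum>r. real (s r) * 2 powr (- real r + 1 - real b))"
    using hY by (simp add: s_def)
  moreover have "E = (\<Sum>r = 0..b. \<lfloor>real (s r div 2 ^ b) * 2 powr (- real r + 1)\<rfloor>)"
    using hE hH by (simp add: s_def)
  ultimately show ?thesis
    using weighted_digit_sum_bounds[of s b, OF bound] weighted_digit_sum_ge_one[of s b, OF bound] hb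
    by simp
qed

end
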